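(* Let $\beta>0$ and let $(\mu_n)_n$ be a sequence of positive real numbers with $\lim_{n\to\infty}\frac{\mu_n}{n}=c$ for some constant $c$; put $\alpha_n=\frac{\mu_n}{n}$. Then (1) the probability measures $\nu_{\beta,\alpha_n}$ converge weakly to $\nu_{\beta,c}$; (2) $\lim_{n\to\infty}E^*_{\beta,\alpha_n}=E^*_{\beta,c}$.
   Context: For $\delta\ge0$: $Q_\delta(t)=t^2+2\delta\log\frac1{|t|}$; for a probability measure $\nu$ on $\mathbb{R}$, $E_{\beta,\delta}(\nu)=\frac{\beta}{2}\int_{\mathbb{R}^2}\log\frac{1}{|s-t|}\,\nu(ds)\nu(dt)+\int_{\mathbb{R}}Q_\delta(t)\,\nu(dt)$, and $E^*_{\beta,\delta}$ is the infimum of $E_{\beta,\delta}$ over all Borel probability measures on $\mathbb{R}$. Put $a_\delta=\sqrt{\tfrac{\beta}{2}}\sqrt{1+\tfrac{2\delta}{\beta}-\sqrt{1+\tfrac{4\delta}{\beta}}}$, $b_\delta=\sqrt{\tfrac{\beta}{2}}\sqrt{1+\tfrac{2\delta}{\beta}+\sqrt{1+\tfrac{4\delta}{\beta}}}$, $S_\delta=[-b_\delta,-a_\delta]\cup[a_\delta,b_\delta]$, and let $\nu_{\beta,\delta}$ be the probability measure with density $\frac{2}{\pi\beta}\frac{1}{|t|}\sqrt{(t^2-a_\delta^2)(b_\delta^2-t^2)}$ on $S_\delta$ and $0$ off $S_\delta$ (this is the minimizer of $E_{\beta,\delta}$). Weak convergence means convergence of integrals of every bounded continuous function. *)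

theory Defs
  imports "HOL-Probability.Probability"
begin

definition Qfield :: "real \<Rightarrow> real \<Rightarrow> ereal" where
  "Qfield \<delta> t = (if t = 0 then (if \<delta> = 0 then 0 else \<infinity>)
                   else ereal (t\<^sup>2 + 2 * \<delta> * ln (1 / \<bar>t\<bar>)))"

definition logker :: "real \<Rightarrow> real \<Rightarrow> ereal" where
  "logker s t = (if s = t then \<infinity> else ereal (ln (1 / \<bar>s - t\<bar>)))"

definition energy_kernel :: "real \<Rightarrow> real \<Rightarrow> real \<times> real \<Rightarrow> ereal" where
  "energy_kernel \<beta> \<delta> p = ereal (\<beta> / 2) * logker (fst p) (snd p)
      + ereal (1/2) * Qfield \<delta> (fst p) + ereal (1/2) * Qfield \<delta> (snd p)"

text \<open>E_{beta,delta}(nu) = (beta/2) iint log(1/|s-t|) + int Q_delta, computed as the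
  integral of the combined kernel over nu x nu (positive part minus negative part).\<close>
definition energy :: "real \<Rightarrow> real \<Rightarrow> real measure \<Rightarrow> ereal" where
  "energy \<beta> \<delta> \<nu> =
     enn2ereal (\<integral>\<^sup>+ p. e2ennreal (energy_kernel \<beta> \<delta> p) \<partial>(\<nu> \<Otimes>\<^sub>M \<nu>))
   - enn2ereal (\<integral>\<^sup>+ p. e2ennreal (- energy_kernel \<beta> \<delta> p) \<partial>(\<nu> \<Otimes>\<^sub>M \<nu>))"

definition prob_measures_R :: "real measure set" where
  "prob_measures_R = {M. prob_space M \<and> sets M = sets borel}"

definition energy_inf :: "real \<Rightarrow> real \<Rightarrow> ereal" where
  "energy_inf \<beta> \<delta> = (INF M \<in> prob_measures_R. energy \<beta> \<delta> M)"

definition a_edge :: "real \<Rightarrow> real \<Rightarrow> real" where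
  "a_edge \<beta> \<delta> = sqrt (\<beta>/2) * sqrt (1 + 2*\<delta>/\<beta> - sqrt (1 + 4*\<delta>/\<beta>))"

definition b_edge :: "real \<Rightarrow> real \<Rightarrow> real" where
  "b_edge \<beta> \<delta> = sqrt (\<beta>/2) * sqrt (1 + 2*\<delta>/\<beta> + sqrt (1 + 4*\<delta>/\<beta>))"

definition supp_S :: "real \<Rightarrow> real \<Rightarrow> real set" where
  "supp_S \<beta> \<delta> = {- b_edge \<beta> \<delta> .. - a_edge \<beta> \<delta>} \<union> {a_edge \<beta> \<delta> .. b_edge \<beta> \<delta>}"

definition eq_density :: "real \<Rightarrow> real \<Rightarrow> real \<Rightarrow> real" where
  "eq_density \<beta> \<delta> t = (if t \<in> supp_S \<beta> \<delta> then
      2 / (pi * \<beta>) * (1 / \<bar>t\<bar>)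
        * sqrt ((t\<^sup>2 - (a_edge \<beta> \<delta>)\<^sup>2) * ((b_edge \<beta> \<delta>)\<^sup>2 - t\<^sup>2))
    else 0)"

definition nu_eq :: "real \<Rightarrow> real \<Rightarrow> real measure" where
  "nu_eq \<beta> \<delta> = density lborel (\<lambda>t. ennreal (eq_density \<beta> \<delta> t))"

definition weak_conv_bc :: "(nat \<Rightarrow> real measure) \<Rightarrow> real measure \<Rightarrow> bool" where
  "weak_conv_bc Ms M \<longleftrightarrow>
     (\<forall>f :: real \<Rightarrow> real. continuous_on UNIV f \<and> bounded (range f) \<longrightarrow>
        (\<lambda>n. integral\<^sup>L (Ms n) f) \<longlonglongrightarrow> integral\<^sup>L M f)"

end

theory Submission
  imports Defs
begin

text \<open>
  Part (1): the density of \<open>\<nu>\<^sub>\<beta>\<^sub>,\<^sub>\<delta>\<close> depends continuously on \<open>\<delta>\<close>, and for \<open>\<delta>\<close> in a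
  bounded set it is dominated by a multiple of the indicator of a fixed interval, so dominated
  convergence applies.

  Part (2): the field contributes \<open>\<delta> \<integral>\<integral> (log (1/|s|) + log (1/|t|))\<close> to the energy, so
  for each fixed measure the energy is affine in \<open>\<delta>\<close>. Hence \<open>E\<^sup>*\<^sub>\<beta>\<^sub>,\<^sub>\<delta>\<close> is concave in
  \<open>\<delta> \<ge> 0\<close>, and as it is bounded below uniformly for bounded \<open>\<delta>\<close>, it is lower
  semicontinuous. For upper semicontinuity take a measure \<open>\<nu>\<close> of nearly minimal energy for
  \<open>c\<close>. Finite energy forces \<open>\<nu>{0} = 0\<close>, so \<open>\<nu>\<close> conditioned on an annulus
  \<open>1/k \<le> |t| \<le> k\<close> loses little energy, and on that annulus the energies for \<open>\<delta>\<close> and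
  \<open>c\<close> differ by at most \<open>2 |\<delta> - c| log k\<close>.
\<close>

lemma ln_le_scaled_square:
  fixes y e :: real
  assumes "y > 0" "e > 0"
  shows "ln y \<le> e/2 * y\<^sup>2 - ln e / 2"
proof -
  have "ln (e * y\<^sup>2) \<le> e * y\<^sup>2 - 1" using assms by (intro ln_le_minus_one) auto
  moreover have "ln (e * y\<^sup>2) = ln e + 2 * ln y" using assms by (simp add: ln_mult ln_realpow)
  ultimately show ?thesis by simp
qed

lemma e2ennreal_shift_add:
  assumes "- ereal C \<le> x" "0 \<le> C"
  shows "e2ennreal (x + ereal C) + e2ennreal (- x) = e2ennreal x + ennreal C"
proof (cases x)
  case (real r)
  then show ?thesis
    using assms by (cases "0 \<le> r") (auto simp: ennreal_neg ennreal_plus[symmetric] simp del: ennreal_plus)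
qed (use assms in auto)

lemma (in prob_space) nn_integral_pos_neg_shift:
  fixes f :: "'a \<Rightarrow> ereal"
  assumes [measurable]: "f \<in> borel_measurable M" and lower: "\<And>x. - ereal C \<le> f x" and "0 \<le> C"
  shows "enn2ereal (\<integral>\<^sup>+x. e2ennreal (f x) \<partial>M) - enn2ereal (\<integral>\<^sup>+x. e2ennreal (- f x) \<partial>M)
       = enn2ereal (\<integral>\<^sup>+x. e2ennreal (f x + ereal C) \<partial>M) - ereal C"
proof -
  define S where "S = (\<integral>\<^sup>+x. e2ennreal (f x + ereal C) \<partial>M)"
  define P where "P = (\<integral>\<^sup>+x. e2ennreal (f x) \<partial>M)"
  define N where "N = (\<integral>\<^sup>+x. e2ennreal (- f x) \<partial>M)"
  have "S + N = (\<integral>\<^sup>+x. e2ennreal (f x + ereal C) + e2ennreal (- f x) \<partial>M)"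
    unfolding S_def N_def by (rule nn_integral_add[symmetric]) auto
  also have "\<dots> = (\<integral>\<^sup>+x. e2ennreal (f x) + ennreal C \<partial>M)"
    using e2ennreal_shift_add[OF lower \<open>0 \<le> C\<close>] by simp
  also have "\<dots> = P + ennreal C"
    unfolding P_def by (subst nn_integral_add) (auto simp: emeasure_space_1)
  finally have "enn2ereal S + enn2ereal N = enn2ereal P + ereal C"
    using \<open>0 \<le> C\<close> by (metis enn2ereal_ennreal plus_ennreal.rep_eq)
  moreover have "N \<le> ennreal C"
  proof -
    have "N \<le> (\<integral>\<^sup>+x. ennreal C \<partial>M)" unfolding N_def
      using lower by (intro nn_integral_mono) (metis e2ennreal_mono e2ennreal_enn2ereal
          enn2ereal_ennreal ereal_uminus_le_reorder \<open>0 \<le> C\<close>)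
    then show ?thesis by (simp add: emeasure_space_1)
  qed
  then have "enn2ereal N \<noteq> \<infinity>" "enn2ereal N \<noteq> - \<infinity>"
    by (auto simp: top_unique dest: ennreal_leI)
  ultimately show ?thesis
    unfolding S_def[symmetric] P_def[symmetric] N_def[symmetric]
    by (cases "enn2ereal N"; cases "enn2ereal S"; cases "enn2ereal P") auto
qed

lemma ennreal_convex_combination:
  fixes x y l :: real
  assumes "0 \<le> x" "0 \<le> y" "0 \<le> l" "l \<le> 1"
  shows "ennreal l * ennreal x + ennreal (1-l) * ennreal y = ennreal (l*x + (1-l)*y)"
  using assms by (simp add: ennreal_mult[symmetric] ennreal_plus[symmetric] del: ennreal_plus)

lemma ereal_convex_shift:
  fixes ga gb gd :: ereal
  assumes "ereal l * ga + ereal (1-l) * gb \<le> gd" "0 \<le> l" "l \<le> 1"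
    "ereal x \<le> ga - ereal C" "ereal y \<le> gb - ereal C"
  shows "ereal (l*x + (1-l)*y) \<le> gd - ereal C"
proof -
  have "ereal l * ereal (x + C) + ereal (1-l) * ereal (y + C) \<le> ereal l * ga + ereal (1-l) * gb"
    using assms(2-5) by (intro add_mono ereal_mult_left_mono) (cases ga; cases gb; auto)+
  then have "ereal (l*x + (1-l)*y + C) \<le> gd" using assms(1) by (simp add: algebra_simps)
  then show ?thesis by (cases gd) auto
qed

lemma nn_integral_pair_uniform_measure:
  assumes "sigma_finite_measure M" "A \<in> sets M" "emeasure M A \<noteq> 0" "emeasure M A \<noteq> \<infinity>"
    and [measurable]: "f \<in> borel_measurable (M \<Otimes>\<^sub>M M)"
  shows "(\<integral>\<^sup>+p. f p \<partial>(uniform_measure M A \<Otimes>\<^sub>M uniform_measure M A))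
    = (\<integral>\<^sup>+p. f p * indicator (A \<times> A) p \<partial>(M \<Otimes>\<^sub>M M)) / (emeasure M A)\<^sup>2"
proof -
  define w where "w x = indicator A x / emeasure M A" for x
  have w_meas[measurable]: "w \<in> borel_measurable M" unfolding w_def using assms(2) by measurable
  have "uniform_measure M A \<Otimes>\<^sub>M uniform_measure M A = density (M \<Otimes>\<^sub>M M) (\<lambda>(x,y). w x * w y)"
    unfolding uniform_measure_def w_def[symmetric]
    using assms(1) prob_space_imp_sigma_finite[OF prob_space_uniform_measure[OF assms(3,4)]]
    by (intro pair_measure_density) (auto simp: uniform_measure_def w_def[abs_def] intro: w_meas[unfolded w_def])
  moreover have "inverse ((emeasure M A)\<^sup>2) = inverse (emeasure M A) * inverse (emeasure M A)"
    by (metis ennreal_inverse_power power2_eq_square)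
  ultimately have "(\<integral>\<^sup>+p. f p \<partial>(uniform_measure M A \<Otimes>\<^sub>M uniform_measure M A))
      = (\<integral>\<^sup>+p. (f p * indicator (A \<times> A) p) / (emeasure M A)\<^sup>2 \<partial>(M \<Otimes>\<^sub>M M))"
    by (simp add: nn_integral_density)
      (auto intro!: nn_integral_cong simp: w_def split: split_indicator
        simp: divide_ennreal_def mult_ac)
  also have "\<dots> = (\<integral>\<^sup>+p. f p * indicator (A \<times> A) p \<partial>(M \<Otimes>\<^sub>M M)) / (emeasure M A)\<^sup>2"
    using assms(5) pair_measureI[OF assms(2) assms(2)]
    by (intro nn_integral_divide borel_measurable_times_ennreal borel_measurable_indicator)
  finally show ?thesis .
qed

lemma tendsto_convex_combination_weights:
  fixes c :: real and \<delta> :: "nat \<Rightarrow> real"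
  assumes "0 \<le> c" "\<delta> \<longlonglongrightarrow> c" "eventually (\<lambda>n. 0 < \<delta> n) sequentially"
  obtains l b where "l \<longlonglongrightarrow> 1"
    "eventually (\<lambda>n. 0 \<le> l n \<and> l n \<le> 1 \<and> b n \<in> {0..c+1} \<and> \<delta> n = l n * c + (1 - l n) * b n)
       sequentially"
proof
  \<comment> \<open>If \<open>c = 0\<close> only the first branch occurs, so the junk value \<open>1/0 = 0\<close> below is harmless.\<close>
  define l where "l n = (if c \<le> \<delta> n then c + 1 - \<delta> n else \<delta> n / c)" for n
  define b where "b n = (if c \<le> \<delta> n then c + 1 else 0)" for n
  have weight_bound: "\<bar>l n - 1\<bar> \<le> \<bar>\<delta> n - c\<bar> * (1 + 1/c)" if "0 < \<delta> n" for n
  proof (cases "c \<le> \<delta> n")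
    case True
    then show ?thesis using assms(1) by (simp add: l_def mult_le_cancel_left1)
  next
    case False
    then have "c > 0" using that by linarith
    then have "\<bar>l n - 1\<bar> = \<bar>\<delta> n - c\<bar> * (1/c)"
      using False by (simp add: l_def field_simps abs_divide)
    also have "\<dots> \<le> \<bar>\<delta> n - c\<bar> * (1 + 1/c)" by (intro mult_left_mono) auto
    finally show ?thesis .
  qed
  have "eventually (\<lambda>n. norm (l n - 1) \<le> \<bar>\<delta> n - c\<bar> * (1 + 1/c)) sequentially"
    using assms(3) by eventually_elim (simp add: weight_bound)
  moreover have "(\<lambda>n. \<bar>\<delta> n - c\<bar> * (1 + 1/c)) \<longlonglongrightarrow> 0"
    using tendsto_mult_right[OF tendsto_rabs_zero[OF LIM_zero[OF assms(2)]]] by simp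
  ultimately have "(\<lambda>n. l n - 1) \<longlonglongrightarrow> 0" by (rule Lim_null_comparison)
  then show "l \<longlonglongrightarrow> 1" by (rule LIM_zero_cancel)
  have "eventually (\<lambda>n. \<delta> n < c + 1) sequentially"
    using assms(2) by (rule order_tendstoD) simp
  then show "eventually (\<lambda>n. 0 \<le> l n \<and> l n \<le> 1 \<and> b n \<in> {0..c+1}
      \<and> \<delta> n = l n * c + (1 - l n) * b n) sequentially"
    using assms(3)
  proof eventually_elim
    case (elim n)
    show ?case
    proof (cases "c \<le> \<delta> n")
      case True
      then show ?thesis using elim by (simp add: l_def b_def algebra_simps)
    next
      case False
      then have "c > 0" using elim by linarith
      then show ?thesis using False elim by (simp add: l_def b_def)
    qed
  qed
qed

lemma concave_lower_semicontinuous: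
  fixes f :: "real \<Rightarrow> ereal" and \<delta> :: "nat \<Rightarrow> real"
  assumes concave: "\<And>a b l x y. 0 \<le> a \<Longrightarrow> 0 \<le> b \<Longrightarrow> 0 \<le> l \<Longrightarrow> l \<le> 1 \<Longrightarrow> 0 < l*a + (1-l)*b
      \<Longrightarrow> ereal x \<le> f a \<Longrightarrow> ereal y \<le> f b \<Longrightarrow> ereal (l*x + (1-l)*y) \<le> f (l*a + (1-l)*b)"
    and lower: "\<And>z. 0 \<le> z \<Longrightarrow> z \<le> c + 1 \<Longrightarrow> ereal Y \<le> f z"
    and "0 \<le> c" "\<delta> \<longlonglongrightarrow> c" "eventually (\<lambda>n. 0 < \<delta> n) sequentially" "a < f c"
  shows "eventually (\<lambda>n. a < f (\<delta> n)) sequentially"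
proof -
  obtain r where r: "a < ereal r" "ereal r < f c" using ereal_dense2[OF \<open>a < f c\<close>] by blast
  obtain l b where "l \<longlonglongrightarrow> 1" and convex: "eventually (\<lambda>n. 0 \<le> l n \<and> l n \<le> 1
      \<and> b n \<in> {0..c+1} \<and> \<delta> n = l n * c + (1 - l n) * b n) sequentially"
    using tendsto_convex_combination_weights[OF assms(3-5)] by blast
  have "(\<lambda>n. ereal (l n * r + (1 - l n) * Y)) \<longlonglongrightarrow> ereal (1 * r + (1 - 1) * Y)"
    by (intro tendsto_intros \<open>l \<longlonglongrightarrow> 1\<close>)
  then have "eventually (\<lambda>n. a < ereal (l n * r + (1 - l n) * Y)) sequentially"
    using r(1) by (intro order_tendstoD(1)) auto
  then show ?thesis using convex assms(5)
  proof eventually_elim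
    case (elim n)
    then have "ereal (l n * r + (1 - l n) * Y) \<le> f (\<delta> n)"
      using concave[of c "b n" "l n" r Y] lower[of "b n"] r(2) \<open>0 \<le> c\<close> by simp
    with elim(1) show ?case by (rule less_le_trans)
  qed
qed

section \<open>Equilibrium measures\<close>

lemma edge_bounds:
  assumes "\<beta> > 0" "\<delta> \<ge> 0"
  shows a_edge_nonneg: "0 \<le> a_edge \<beta> \<delta>"
    and a_edge_le_b_edge: "a_edge \<beta> \<delta> \<le> b_edge \<beta> \<delta>"
    and b_edge_le_sqrt: "b_edge \<beta> \<delta> \<le> sqrt (\<beta> + 2*\<delta>)"
proof -
  define s where "s = sqrt (1 + 4*\<delta>/\<beta>)"
  have "1 + 4*\<delta>/\<beta> \<le> (1 + 2*\<delta>/\<beta>)\<^sup>2"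
    using assms by (simp add: power2_eq_square algebra_simps)
  then have s_le: "s \<le> 1 + 2*\<delta>/\<beta>"
    unfolding s_def using assms by (metis real_le_lsqrt add_nonneg_nonneg divide_nonneg_pos
        mult_nonneg_nonneg zero_le_numeral zero_le_one)
  have s_nonneg: "0 \<le> s" unfolding s_def using assms by simp
  show "0 \<le> a_edge \<beta> \<delta>" unfolding a_edge_def s_def[symmetric] using s_le assms by simp
  show "a_edge \<beta> \<delta> \<le> b_edge \<beta> \<delta>" unfolding a_edge_def b_edge_def s_def[symmetric]
    using s_nonneg assms by (intro mult_left_mono real_sqrt_le_mono) auto
  have "b_edge \<beta> \<delta> \<le> sqrt (\<beta>/2) * sqrt (2 + 4*\<delta>/\<beta>)" unfolding b_edge_def s_def[symmetric]
    using s_le assms by (intro mult_left_mono real_sqrt_le_mono) auto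
  also have "\<dots> = sqrt (\<beta> + 2*\<delta>)"
    using assms by (simp add: real_sqrt_mult[symmetric] field_simps)
  finally show "b_edge \<beta> \<delta> \<le> sqrt (\<beta> + 2*\<delta>)" .
qed

lemma eq_density_eq_max:
  assumes "\<beta> > 0" "\<delta> \<ge> 0"
  shows "eq_density \<beta> \<delta> t = 2 / (pi * \<beta>) * (1 / \<bar>t\<bar>)
     * sqrt (max 0 ((t\<^sup>2 - (a_edge \<beta> \<delta>)\<^sup>2) * ((b_edge \<beta> \<delta>)\<^sup>2 - t\<^sup>2)))"
proof -
  define a where "a = a_edge \<beta> \<delta>"
  define b where "b = b_edge \<beta> \<delta>"
  have "0 \<le> a" "a \<le> b" using edge_bounds[OF assms] unfolding a_def b_def by auto
  then have supp: "t \<in> supp_S \<beta> \<delta> \<longleftrightarrow> a\<^sup>2 \<le> t\<^sup>2 \<and> t\<^sup>2 \<le> b\<^sup>2"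
    unfolding supp_S_def a_def[symmetric] b_def[symmetric]
    by (auto simp: abs_le_square_iff[symmetric] abs_le_iff)
  have "a\<^sup>2 \<le> b\<^sup>2" using \<open>0 \<le> a\<close> \<open>a \<le> b\<close> by (simp add: power_mono)
  have "(t\<^sup>2 - a\<^sup>2) * (b\<^sup>2 - t\<^sup>2) \<le> 0" if "t \<notin> supp_S \<beta> \<delta>"
  proof (cases "a\<^sup>2 \<le> t\<^sup>2")
    case True
    then show ?thesis using that supp by (intro mult_nonneg_nonpos) auto
  next
    case False
    then show ?thesis using \<open>a\<^sup>2 \<le> b\<^sup>2\<close> by (intro mult_nonpos_nonneg) auto
  qed
  then show ?thesis
    using supp unfolding eq_density_def a_def[symmetric] b_def[symmetric] by auto
qed

lemma eq_density_nonneg: "\<beta> > 0 \<Longrightarrow> \<delta> \<ge> 0 \<Longrightarrow> 0 \<le> eq_density \<beta> \<delta> t"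
  by (simp add: eq_density_eq_max)

lemma eq_density_le_indicator:
  assumes "\<beta> > 0" "\<delta> \<ge> 0" "b_edge \<beta> \<delta> \<le> R"
  shows "eq_density \<beta> \<delta> t \<le> 2 / (pi * \<beta>) * R * indicator {-R..R} t"
proof (cases "t \<in> supp_S \<beta> \<delta>")
  case True
  define a where "a = a_edge \<beta> \<delta>"
  define b where "b = b_edge \<beta> \<delta>"
  have "0 \<le> a" "a \<le> b" using edge_bounds[OF assms(1,2)] unfolding a_def b_def by auto
  have t: "a \<le> \<bar>t\<bar>" "\<bar>t\<bar> \<le> b"
    using True \<open>0 \<le> a\<close> unfolding supp_S_def a_def[symmetric] b_def[symmetric] by auto
  then have "a\<^sup>2 \<le> t\<^sup>2" "t\<^sup>2 \<le> b\<^sup>2" using \<open>0 \<le> a\<close> by (auto simp: abs_le_square_iff[symmetric])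
  then have "(t\<^sup>2 - a\<^sup>2) * (b\<^sup>2 - t\<^sup>2) \<le> t\<^sup>2 * b\<^sup>2" by (intro mult_mono) auto
  then have "sqrt ((t\<^sup>2 - a\<^sup>2) * (b\<^sup>2 - t\<^sup>2)) \<le> sqrt (t\<^sup>2 * b\<^sup>2)" by (rule real_sqrt_le_mono)
  also have "\<dots> = \<bar>t\<bar> * b" using \<open>0 \<le> a\<close> \<open>a \<le> b\<close> by (simp add: real_sqrt_mult)
  also have "\<dots> \<le> \<bar>t\<bar> * R" using assms(3) unfolding b_def by (simp add: mult_left_mono)
  finally have le: "(1 / \<bar>t\<bar>) * sqrt ((t\<^sup>2 - a\<^sup>2) * (b\<^sup>2 - t\<^sup>2)) \<le> R"
    using t assms(3) unfolding b_def by (cases "t = 0") (auto simp: field_simps)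
  moreover have "eq_density \<beta> \<delta> t = 2 / (pi * \<beta>) * ((1 / \<bar>t\<bar>) * sqrt ((t\<^sup>2 - a\<^sup>2) * (b\<^sup>2 - t\<^sup>2)))"
    using True unfolding eq_density_def a_def b_def by simp
  moreover have "t \<in> {-R..R}" using t assms(3) unfolding b_def by auto
  ultimately show ?thesis
    using mult_left_mono[OF le, of "2 / (pi * \<beta>)"] assms(1) by (simp add: mult.assoc)
next
  case False
  have "0 \<le> R" using edge_bounds[OF assms(1,2)] assms(3) by linarith
  with False show ?thesis using assms(1) by (simp add: eq_density_def)
qed

lemma eq_density_measurable[measurable]: "eq_density \<beta> \<delta> \<in> borel_measurable borel"
  unfolding eq_density_def supp_S_def by measurable

lemma eq_density_tendsto:
  assumes "\<beta> > 0" "\<delta> \<longlonglongrightarrow> c" "\<And>n. \<delta> n \<ge> 0" "c \<ge> 0"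
  shows "(\<lambda>n. eq_density \<beta> (\<delta> n) t) \<longlonglongrightarrow> eq_density \<beta> c t"
proof -
  have "(\<lambda>n. a_edge \<beta> (\<delta> n)) \<longlonglongrightarrow> a_edge \<beta> c" "(\<lambda>n. b_edge \<beta> (\<delta> n)) \<longlonglongrightarrow> b_edge \<beta> c"
    unfolding a_edge_def b_edge_def using assms(1) by (auto intro!: tendsto_intros assms(2))
  then show ?thesis
    unfolding eq_density_eq_max[OF assms(1,3)] eq_density_eq_max[OF assms(1,4)]
    by (intro tendsto_intros)
qed

lemma integral_nu_eq:
  assumes "\<beta> > 0" "\<delta> \<ge> 0" "f \<in> borel_measurable borel"
  shows "integral\<^sup>L (nu_eq \<beta> \<delta>) f = (\<integral>t. eq_density \<beta> \<delta> t * f t \<partial>lborel)"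
  unfolding nu_eq_def using assms by (subst integral_density) (auto simp: eq_density_nonneg)

lemma weak_conv_nu_eq:
  assumes "\<beta> > 0" "\<delta> \<longlonglongrightarrow> c" "\<And>n. \<delta> n \<ge> 0" "c \<ge> 0"
  shows "weak_conv_bc (\<lambda>n. nu_eq \<beta> (\<delta> n)) (nu_eq \<beta> c)"
  unfolding weak_conv_bc_def
proof (intro allI impI)
  fix f :: "real \<Rightarrow> real" assume "continuous_on UNIV f \<and> bounded (range f)"
  then have f_meas: "f \<in> borel_measurable borel" and "bounded (range f)"
    by (auto intro: borel_measurable_continuous_onI)
  then obtain F where F: "\<And>t. \<bar>f t\<bar> \<le> F" unfolding bounded_iff by auto
  obtain M where M: "\<And>n. \<delta> n \<le> M"
    using convergent_imp_Bseq[OF convergentI[OF assms(2)]] by (metis BseqE abs_le_D1 real_norm_def)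
  define R where "R = sqrt (\<beta> + 2*M)"
  have b_edge_le: "b_edge \<beta> (\<delta> n) \<le> R" for n
    using b_edge_le_sqrt[OF assms(1,3)] M assms(1,3) unfolding R_def
    by (meson add_le_cancel_left mult_le_cancel_left_pos order_trans real_sqrt_le_mono zero_less_numeral)
  have "0 \<le> R" using b_edge_le[of 0] a_edge_nonneg a_edge_le_b_edge assms(1,3) by (meson order_trans)
  have "(\<lambda>n. \<integral>t. eq_density \<beta> (\<delta> n) t * f t \<partial>lborel) \<longlonglongrightarrow> (\<integral>t. eq_density \<beta> c t * f t \<partial>lborel)"
  proof (rule integral_dominated_convergence
      [where w = "\<lambda>t. F * (2 / (pi * \<beta>) * R * indicator {-R..R} t)"])
    show "integrable lborel (\<lambda>t. F * (2 / (pi * \<beta>) * R * indicator {-R..R} t))"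
      by (intro integrable_mult_right integrable_real_indicator) (auto simp: emeasure_lborel_Icc_eq)
    show "AE t in lborel. (\<lambda>n. eq_density \<beta> (\<delta> n) t * f t) \<longlonglongrightarrow> eq_density \<beta> c t * f t"
      by (intro AE_I2 tendsto_mult_right eq_density_tendsto[OF assms])
    show "AE t in lborel. norm (eq_density \<beta> (\<delta> n) t * f t)
        \<le> F * (2 / (pi * \<beta>) * R * indicator {-R..R} t)" for n
    proof (rule AE_I2)
      fix t
      have "norm (eq_density \<beta> (\<delta> n) t * f t) = eq_density \<beta> (\<delta> n) t * \<bar>f t\<bar>"
        using eq_density_nonneg[OF assms(1,3)] by (simp add: abs_mult)
      also have "\<dots> \<le> (2 / (pi * \<beta>) * R * indicator {-R..R} t) * F"
        using eq_density_le_indicator[OF assms(1,3) b_edge_le] eq_density_nonneg[OF assms(1,3)] F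
          \<open>0 \<le> R\<close> assms(1)
        by (intro mult_mono) (auto intro: order_trans)
      finally show "norm (eq_density \<beta> (\<delta> n) t * f t)
          \<le> F * (2 / (pi * \<beta>) * R * indicator {-R..R} t)" by (simp add: mult.commute)
    qed
  qed (use f_meas in auto)
  then show "(\<lambda>n. integral\<^sup>L (nu_eq \<beta> (\<delta> n)) f) \<longlonglongrightarrow> integral\<^sup>L (nu_eq \<beta> c) f"
    using integral_nu_eq assms f_meas by simp
qed

section \<open>The energy kernel\<close>

definition free_kernel :: "real \<Rightarrow> real \<Rightarrow> real \<Rightarrow> real" where
  "free_kernel \<beta> s t = \<beta>/2 * ln (1/\<bar>s - t\<bar>) + s\<^sup>2/2 + t\<^sup>2/2"

definition field_weight :: "real \<Rightarrow> real \<Rightarrow> real" where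
  "field_weight s t = ln (1/\<bar>s\<bar>) + ln (1/\<bar>t\<bar>)"

lemma energy_kernel_finite:
  assumes "s \<noteq> t" "\<delta> = 0 \<or> s \<noteq> 0 \<and> t \<noteq> 0"
  shows "energy_kernel \<beta> \<delta> (s,t) = ereal (free_kernel \<beta> s t + \<delta> * field_weight s t)"
  using assms
  by (auto simp: energy_kernel_def logker_def Qfield_def free_kernel_def field_weight_def
      add_divide_distrib algebra_simps)

lemma energy_kernel_infinite:
  assumes "\<beta> > 0" "s = t \<or> \<delta> \<noteq> 0 \<and> (s = 0 \<or> t = 0)"
  shows "energy_kernel \<beta> \<delta> (s,t) = \<infinity>"
  using assms by (auto simp: energy_kernel_def logker_def Qfield_def)

lemma energy_kernel_measurable[measurable]:
  "energy_kernel \<beta> \<delta> \<in> borel_measurable (borel \<Otimes>\<^sub>M borel)"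
  unfolding energy_kernel_def logker_def Qfield_def by measurable

lemma log_term_lower_bound:
  fixes \<beta> s t :: real
  assumes "\<beta> > 0" "s \<noteq> t"
  shows "\<beta>/4 * ln (1/(2*\<beta>)) - s\<^sup>2/4 - t\<^sup>2/4 \<le> \<beta>/2 * ln (1/\<bar>s - t\<bar>)"
proof -
  define e where "e = 1/(2*\<beta>)"
  have "e > 0" "\<beta> * e = 1/2" using assms by (auto simp: e_def)
  have "ln \<bar>s - t\<bar> \<le> e/2 * \<bar>s - t\<bar>\<^sup>2 - ln e / 2"
    using ln_le_scaled_square[OF _ \<open>e > 0\<close>, of "\<bar>s - t\<bar>"] assms by simp
  then have "\<beta>/2 * ln \<bar>s - t\<bar> \<le> \<beta>/2 * (e/2 * \<bar>s - t\<bar>\<^sup>2 - ln e / 2)"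
    using assms by (intro mult_left_mono) auto
  also have "\<dots> = (s - t)\<^sup>2 / 8 - \<beta>/4 * ln e"
    using \<open>\<beta> * e = 1/2\<close> by (simp add: algebra_simps)
  also have "\<dots> \<le> s\<^sup>2/4 + t\<^sup>2/4 - \<beta>/4 * ln e"
  proof -
    have "(s - t)\<^sup>2 + (s + t)\<^sup>2 = 2 * s\<^sup>2 + 2 * t\<^sup>2" by (simp add: power2_diff power2_sum)
    then show ?thesis using zero_le_power2[of "s + t"] by linarith
  qed
  finally show ?thesis using assms unfolding e_def by (simp add: ln_div)
qed

lemma half_field_lower_bound:
  fixes \<delta> D s :: real
  assumes "0 \<le> \<delta>" "\<delta> \<le> D" "\<delta> = 0 \<or> s \<noteq> 0"
  shows "s\<^sup>2/4 - D * ln (2*(D+1)) / 2 \<le> s\<^sup>2/2 + \<delta> * ln (1/\<bar>s\<bar>)"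
proof (cases "\<delta> = 0")
  case True
  have "0 \<le> D * ln (2*(D+1))" using assms by simp
  then show ?thesis using True by (simp add: field_simps)
next
  case False
  define e where "e = 1/(2*(D+1))"
  have "e > 0" "\<delta> * e \<le> 1/2" using assms by (auto simp: e_def field_simps)
  have "ln \<bar>s\<bar> \<le> e/2 * s\<^sup>2 + ln (2*(D+1)) / 2"
    using ln_le_scaled_square[OF _ \<open>e > 0\<close>, of "\<bar>s\<bar>"] assms False
    by (simp add: e_def ln_div)
  from mult_left_mono[OF this assms(1)]
  have "\<delta> * ln \<bar>s\<bar> \<le> (\<delta> * e) * s\<^sup>2 / 2 + \<delta> * ln (2*(D+1)) / 2"
    by (simp add: algebra_simps)
  also have "\<dots> \<le> s\<^sup>2/4 + D * ln (2*(D+1)) / 2"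
    using \<open>\<delta> * e \<le> 1/2\<close> assms mult_right_mono[OF \<open>\<delta> * e \<le> 1/2\<close>, of "s\<^sup>2"]
    by (intro add_mono divide_right_mono mult_right_mono) auto
  finally show ?thesis using assms False by (simp add: ln_div)
qed

definition kernel_lower_const :: "real \<Rightarrow> real \<Rightarrow> real" where
  "kernel_lower_const \<beta> D = \<bar>\<beta>/4 * ln (1/(2*\<beta>))\<bar> + D * ln (2*(D+1))"

lemma kernel_lower_const_nonneg: "0 \<le> D \<Longrightarrow> 0 \<le> kernel_lower_const \<beta> D"
  unfolding kernel_lower_const_def by simp

lemma energy_kernel_lower:
  assumes "\<beta> > 0" "0 \<le> \<delta>" "\<delta> \<le> D"
  shows "- ereal (kernel_lower_const \<beta> D) \<le> energy_kernel \<beta> \<delta> p"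
proof -
  obtain s t where p: "p = (s,t)" by force
  show ?thesis
  proof (cases "s = t \<or> \<delta> \<noteq> 0 \<and> (s = 0 \<or> t = 0)")
    case True
    then show ?thesis using energy_kernel_infinite[OF assms(1)] p by simp
  next
    case False
    then have "\<delta> = 0 \<or> s \<noteq> 0" "\<delta> = 0 \<or> t \<noteq> 0" "s \<noteq> t" by auto
    from log_term_lower_bound[OF assms(1) this(3)]
      half_field_lower_bound[OF assms(2,3) this(1)] half_field_lower_bound[OF assms(2,3) this(2)]
    have "- kernel_lower_const \<beta> D \<le> free_kernel \<beta> s t + \<delta> * field_weight s t"
      unfolding kernel_lower_const_def free_kernel_def field_weight_def by (simp add: algebra_simps)
    then show ?thesis using energy_kernel_finite False p by simp
  qed
qed

section \<open>Concavity and lower semicontinuity of the minimal energy\<close>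

definition shifted_energy :: "real \<Rightarrow> real \<Rightarrow> real \<Rightarrow> real measure \<Rightarrow> ennreal" where
  "shifted_energy \<beta> \<delta> C \<nu> = (\<integral>\<^sup>+p. e2ennreal (energy_kernel \<beta> \<delta> p + ereal C) \<partial>(\<nu> \<Otimes>\<^sub>M \<nu>))"

lemma energy_kernel_measurable_pair:
  "sets \<nu> = sets borel \<Longrightarrow> energy_kernel \<beta> \<delta> \<in> borel_measurable (\<nu> \<Otimes>\<^sub>M \<nu>)"
  using measurable_cong_sets[OF sets_pair_measure_cong refl] energy_kernel_measurable by blast

lemma energy_eq_shifted_energy:
  assumes "\<beta> > 0" "0 \<le> \<delta>" "\<delta> \<le> D" "\<nu> \<in> prob_measures_R"
  shows "energy \<beta> \<delta> \<nu> = enn2ereal (shifted_energy \<beta> \<delta> (kernel_lower_const \<beta> D) \<nu>)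
      - ereal (kernel_lower_const \<beta> D)"
proof -
  interpret prob_space "\<nu> \<Otimes>\<^sub>M \<nu>"
    using assms(4) by (auto simp: prob_measures_R_def intro: prob_space_pair)
  show ?thesis unfolding energy_def shifted_energy_def
    using assms by (intro nn_integral_pos_neg_shift energy_kernel_lower kernel_lower_const_nonneg
        energy_kernel_measurable_pair) (auto simp: prob_measures_R_def)
qed

lemma energy_inf_lower:
  assumes "\<beta> > 0" "0 \<le> \<delta>" "\<delta> \<le> D"
  shows "- ereal (kernel_lower_const \<beta> D) \<le> energy_inf \<beta> \<delta>"
  unfolding energy_inf_def
proof (rule INF_greatest)
  fix \<nu> assume "\<nu> \<in> prob_measures_R"
  then show "- ereal (kernel_lower_const \<beta> D) \<le> energy \<beta> \<delta> \<nu>"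
    unfolding energy_eq_shifted_energy[OF assms \<open>\<nu> \<in> prob_measures_R\<close>]
    using enn2ereal_nonneg[of "shifted_energy \<beta> \<delta> (kernel_lower_const \<beta> D) \<nu>"]
    by (cases "enn2ereal (shifted_energy \<beta> \<delta> (kernel_lower_const \<beta> D) \<nu>)") auto
qed

lemma shifted_energy_kernel_concave:
  assumes "\<beta> > 0" "0 \<le> a" "a \<le> D" "0 \<le> b" "b \<le> D" "0 \<le> l" "l \<le> 1"
    and "\<delta> = l*a + (1-l)*b" "\<delta> > 0"
  defines "C \<equiv> kernel_lower_const \<beta> D"
  shows "ennreal l * e2ennreal (energy_kernel \<beta> a p + ereal C)
       + ennreal (1-l) * e2ennreal (energy_kernel \<beta> b p + ereal C)
       \<le> e2ennreal (energy_kernel \<beta> \<delta> p + ereal C)"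
proof -
  obtain s t where p: "p = (s,t)" by force
  show ?thesis
  proof (cases "s = t \<or> s = 0 \<or> t = 0")
    case True
    then show ?thesis using energy_kernel_infinite[OF assms(1), of s t \<delta>] assms(9) p by auto
  next
    case False
    define v where "v z = free_kernel \<beta> s t + z * field_weight s t + C" for z
    have kernel: "e2ennreal (energy_kernel \<beta> z p + ereal C) = ennreal (v z)" for z
      using False by (simp add: p energy_kernel_finite v_def)
    have "0 \<le> v z" if "0 \<le> z" "z \<le> D" for z
      using energy_kernel_lower[OF assms(1) that, of p] False
      by (simp add: p energy_kernel_finite v_def C_def)
    moreover have "v \<delta> = l * v a + (1-l) * v b"
      unfolding v_def assms(8) by (simp add: algebra_simps)
    ultimately show ?thesis
      unfolding kernel using assms(2-7) by (simp add: ennreal_convex_combination)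
  qed
qed

lemma energy_concave:
  assumes "\<beta> > 0" "0 \<le> a" "0 \<le> b" "0 \<le> l" "l \<le> 1" "\<delta> = l*a + (1-l)*b" "\<delta> > 0"
    and "\<nu> \<in> prob_measures_R" "ereal x \<le> energy \<beta> a \<nu>" "ereal y \<le> energy \<beta> b \<nu>"
  shows "ereal (l*x + (1-l)*y) \<le> energy \<beta> \<delta> \<nu>"
proof -
  define D where "D = max a b"
  define C where "C = kernel_lower_const \<beta> D"
  define G where "G z = shifted_energy \<beta> z C \<nu>" for z
  have "\<delta> \<le> D"
    using convex_bound_le[of a D b l "1-l"] assms(2-6) unfolding D_def by auto
  have energy: "energy \<beta> z \<nu> = enn2ereal (G z) - ereal C" if "0 \<le> z" "z \<le> D" for z
    unfolding G_def C_def using energy_eq_shifted_energy[OF assms(1) that assms(8)] .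
  have "sets \<nu> = sets borel" using assms(8) by (simp add: prob_measures_R_def)
  then have "ennreal l * G a + ennreal (1-l) * G b
      = (\<integral>\<^sup>+p. ennreal l * e2ennreal (energy_kernel \<beta> a p + ereal C)
          + ennreal (1-l) * e2ennreal (energy_kernel \<beta> b p + ereal C) \<partial>(\<nu> \<Otimes>\<^sub>M \<nu>))"
    unfolding G_def shifted_energy_def using energy_kernel_measurable_pair
    by (subst nn_integral_add) (auto simp: nn_integral_cmult)
  also have "\<dots> \<le> G \<delta>"
    unfolding G_def shifted_energy_def C_def using assms(1-7)
    by (intro nn_integral_mono shifted_energy_kernel_concave) (auto simp: D_def)
  finally have "ereal l * enn2ereal (G a) + ereal (1-l) * enn2ereal (G b) \<le> enn2ereal (G \<delta>)"
    using assms(4,5) by (simp add: less_eq_ennreal.rep_eq plus_ennreal.rep_eq times_ennreal.rep_eq)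
  then show ?thesis
    using assms(2-5,7,9,10) \<open>\<delta> \<le> D\<close> by (auto simp: energy D_def intro!: ereal_convex_shift)
qed

lemma energy_inf_concave:
  assumes "\<beta> > 0" "0 \<le> a" "0 \<le> b" "0 \<le> l" "l \<le> 1" "\<delta> = l*a + (1-l)*b" "\<delta> > 0"
    and "ereal x \<le> energy_inf \<beta> a" "ereal y \<le> energy_inf \<beta> b"
  shows "ereal (l*x + (1-l)*y) \<le> energy_inf \<beta> \<delta>"
  unfolding energy_inf_def
proof (rule INF_greatest)
  fix \<nu> assume \<nu>: "\<nu> \<in> prob_measures_R"
  have "ereal x \<le> energy \<beta> a \<nu>" "ereal y \<le> energy \<beta> b \<nu>"
    using assms(8,9) \<nu> unfolding energy_inf_def by (meson INF_lower order_trans)+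
  then show "ereal (l*x + (1-l)*y) \<le> energy \<beta> \<delta> \<nu>"
    by (rule energy_concave[OF assms(1-7) \<nu>])
qed

section \<open>Upper semicontinuity of the minimal energy\<close>

definition annulus :: "real \<Rightarrow> real set" where
  "annulus k = {x. 1/k \<le> \<bar>x\<bar> \<and> \<bar>x\<bar> \<le> k}"

lemma annulus_borel[measurable]: "annulus k \<in> sets borel"
  unfolding annulus_def by measurable

lemma abs_ln_inverse_le:
  assumes "k \<ge> 1" "x \<in> annulus k"
  shows "\<bar>ln (1/\<bar>x\<bar>)\<bar> \<le> ln k"
proof -
  have "\<bar>x\<bar> > 0" using assms by (auto simp: annulus_def intro: less_le_trans[of 0 "1/k"])
  then have "ln (1/k) \<le> ln \<bar>x\<bar>" "ln \<bar>x\<bar> \<le> ln k" using assms by (auto simp: annulus_def)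
  moreover have "ln (1/\<bar>x\<bar>) = - ln \<bar>x\<bar>" "ln (1/k) = - ln k"
    using assms \<open>\<bar>x\<bar> > 0\<close> by (simp_all add: ln_div)
  ultimately show ?thesis unfolding abs_le_iff by linarith
qed

lemma energy_kernel_annulus_perturb:
  assumes "\<beta> > 0" "0 \<le> c" "c \<le> D" "0 \<le> \<delta>" "\<delta> \<le> D" "k \<ge> 1" "x \<in> annulus k" "y \<in> annulus k"
  defines "C \<equiv> kernel_lower_const \<beta> D"
  shows "e2ennreal (energy_kernel \<beta> \<delta> (x,y) + ereal C)
     \<le> e2ennreal (energy_kernel \<beta> c (x,y) + ereal C) + ennreal (\<bar>\<delta> - c\<bar> * (2 * ln k))"
proof (cases "x = y")
  case True
  then show ?thesis using energy_kernel_infinite[OF assms(1)] by simp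
next
  case False
  have "x \<noteq> 0" "y \<noteq> 0" using assms(6-8) by (auto simp: annulus_def intro: less_le_trans[of 0 "1/k"])
  define v where "v z = free_kernel \<beta> x y + z * field_weight x y + C" for z
  have finite: "energy_kernel \<beta> z (x,y) = ereal (free_kernel \<beta> x y + z * field_weight x y)" for z
    using False \<open>x \<noteq> 0\<close> \<open>y \<noteq> 0\<close> by (simp add: energy_kernel_finite)
  then have kernel: "energy_kernel \<beta> z (x,y) + ereal C = ereal (v z)" for z
    by (simp add: v_def)
  have "0 \<le> v c"
    using energy_kernel_lower[OF assms(1-3), of "(x,y)"] unfolding finite C_def v_def by simp
  have "(\<delta> - c) * field_weight x y \<le> \<bar>\<delta> - c\<bar> * \<bar>field_weight x y\<bar>"
    by (metis abs_ge_self abs_mult)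
  also have "\<dots> \<le> \<bar>\<delta> - c\<bar> * (2 * ln k)"
    using abs_ln_inverse_le[OF assms(6,7)] abs_ln_inverse_le[OF assms(6,8)]
    unfolding field_weight_def by (intro mult_left_mono) auto
  finally have "(\<delta> - c) * field_weight x y \<le> \<bar>\<delta> - c\<bar> * (2 * ln k)" .
  then have "v \<delta> \<le> v c + \<bar>\<delta> - c\<bar> * (2 * ln k)" by (simp add: v_def algebra_simps)
  then show ?thesis
    unfolding kernel using \<open>0 \<le> v c\<close> assms(6)
    by (simp add: ennreal_plus[symmetric] ennreal_leI del: ennreal_plus)
qed

lemma uniform_measure_in_prob_measures_R:
  assumes "\<nu> \<in> prob_measures_R" "A \<in> sets borel" "measure \<nu> A > 0"
  shows "uniform_measure \<nu> A \<in> prob_measures_R"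
proof -
  interpret prob_space \<nu> using assms(1) by (simp add: prob_measures_R_def)
  show ?thesis
    using prob_space_uniform_measure[of \<nu> A] assms
    by (simp add: prob_measures_R_def emeasure_eq_measure)
qed

lemma shifted_energy_uniform_annulus_le:
  assumes "\<beta> > 0" "0 \<le> c" "c \<le> D" "0 \<le> \<delta>" "\<delta> \<le> D" "\<nu> \<in> prob_measures_R" "k \<ge> 1"
    and "measure \<nu> (annulus k) = m" "m > 0"
    and "shifted_energy \<beta> c (kernel_lower_const \<beta> D) \<nu> = ennreal g" "0 \<le> g"
  defines "C \<equiv> kernel_lower_const \<beta> D"
  shows "shifted_energy \<beta> \<delta> C (uniform_measure \<nu> (annulus k)) \<le> ennreal (g / m\<^sup>2 + \<bar>\<delta> - c\<bar> * (2 * ln k))"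
proof -
  define A where "A = annulus k"
  define B where "B = \<bar>\<delta> - c\<bar> * (2 * ln k)"
  have "0 \<le> B" using assms(7) by (simp add: B_def)
  interpret prob_space \<nu> using assms(6) by (simp add: prob_measures_R_def)
  have sets: "sets \<nu> = sets borel" using assms(6) by (simp add: prob_measures_R_def)
  have A[measurable]: "A \<in> sets \<nu>" unfolding sets A_def by simp
  have mA: "emeasure \<nu> A = ennreal m" using assms(8) by (simp add: A_def emeasure_eq_measure)
  have K_meas: "(\<lambda>p. e2ennreal (energy_kernel \<beta> z p + ereal C)) \<in> borel_measurable (\<nu> \<Otimes>\<^sub>M \<nu>)" for z
    using energy_kernel_measurable_pair[OF sets] by measurable
  have "shifted_energy \<beta> \<delta> C (uniform_measure \<nu> A)
      = (\<integral>\<^sup>+p. e2ennreal (energy_kernel \<beta> \<delta> p + ereal C) * indicator (A \<times> A) p \<partial>(\<nu> \<Otimes>\<^sub>M \<nu>)) / (ennreal m)\<^sup>2"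
    unfolding shifted_energy_def mA[symmetric] using assms(9) mA
    by (intro nn_integral_pair_uniform_measure K_meas A prob_space_imp_sigma_finite prob_space_axioms)
      auto
  also have "\<dots> \<le> (\<integral>\<^sup>+p. e2ennreal (energy_kernel \<beta> c p + ereal C) + ennreal B * indicator (A \<times> A) p
      \<partial>(\<nu> \<Otimes>\<^sub>M \<nu>)) / (ennreal m)\<^sup>2"
    unfolding A_def B_def C_def using assms(1-5,7)
    by (intro divide_right_mono_ennreal nn_integral_mono)
      (auto split: split_indicator intro: energy_kernel_annulus_perturb)
  also have "\<dots> = (ennreal g + ennreal B * (ennreal m * ennreal m)) / (ennreal m)\<^sup>2"
  proof -
    have "(\<integral>\<^sup>+p. ennreal B * indicator (A \<times> A) p \<partial>(\<nu> \<Otimes>\<^sub>M \<nu>)) = ennreal B * (ennreal m * ennreal m)"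
      using A by (subst nn_integral_cmult_indicator) (auto simp: emeasure_pair_measure_Times mA)
    then show ?thesis
      using assms(10) K_meas A unfolding C_def shifted_energy_def by (subst nn_integral_add) auto
  qed
  also have "\<dots> = ennreal (g / m\<^sup>2 + B)"
    using assms(9,11) \<open>0 \<le> B\<close>
    by (simp add: ennreal_mult[symmetric] ennreal_plus[symmetric] ennreal_power[symmetric]
        divide_ennreal add_divide_distrib power2_eq_square del: ennreal_plus)
  finally show ?thesis unfolding A_def B_def .
qed

lemma energy_inf_le_annulus:
  assumes "\<beta> > 0" "0 \<le> c" "c \<le> D" "0 \<le> \<delta>" "\<delta> \<le> D" "\<nu> \<in> prob_measures_R" "k \<ge> 1"
    and "measure \<nu> (annulus k) = m" "m > 0"
    and "shifted_energy \<beta> c (kernel_lower_const \<beta> D) \<nu> = ennreal g" "0 \<le> g"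
  defines "C \<equiv> kernel_lower_const \<beta> D"
  shows "energy_inf \<beta> \<delta> \<le> ereal (g / m\<^sup>2 + \<bar>\<delta> - c\<bar> * (2 * ln k) - C)"
proof -
  define \<nu>' where "\<nu>' = uniform_measure \<nu> (annulus k)"
  have \<nu>': "\<nu>' \<in> prob_measures_R"
    unfolding \<nu>'_def using assms(6,8,9) by (intro uniform_measure_in_prob_measures_R) auto
  have "enn2ereal (shifted_energy \<beta> \<delta> C \<nu>') \<le> ereal (g / m\<^sup>2 + \<bar>\<delta> - c\<bar> * (2 * ln k))"
    using shifted_energy_uniform_annulus_le[OF assms(1-11)] assms(7,11) unfolding \<nu>'_def C_def
    by (simp add: less_eq_ennreal.rep_eq ennreal_plus[symmetric] del: ennreal_plus)
  from ereal_minus_mono[OF this order_refl, of "ereal C"]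
  have "energy \<beta> \<delta> \<nu>' \<le> ereal (g / m\<^sup>2 + \<bar>\<delta> - c\<bar> * (2 * ln k) - C)"
    unfolding energy_eq_shifted_energy[OF assms(1,4,5) \<nu>'] C_def by simp
  then show ?thesis
    unfolding energy_inf_def by (rule INF_lower2[OF \<nu>'])
qed

lemma emeasure_zero_if_shifted_energy_finite:
  assumes "\<beta> > 0" "\<nu> \<in> prob_measures_R" "shifted_energy \<beta> c C \<nu> \<noteq> \<top>"
  shows "emeasure \<nu> {0} = 0"
proof (rule ccontr)
  assume "emeasure \<nu> {0} \<noteq> 0"
  have sets: "sets \<nu> = sets borel" and "prob_space \<nu>" using assms(2) by (auto simp: prob_measures_R_def)
  then interpret sigma_finite_measure \<nu> by (simp add: prob_space_imp_sigma_finite)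
  have zero: "{0::real} \<in> sets \<nu>" unfolding sets by simp
  have "\<top> * emeasure (\<nu> \<Otimes>\<^sub>M \<nu>) ({0} \<times> {0}) = (\<integral>\<^sup>+p. \<top> * indicator ({0} \<times> {0}) p \<partial>(\<nu> \<Otimes>\<^sub>M \<nu>))"
    by (rule nn_integral_cmult_indicator[symmetric]) (rule pair_measureI[OF zero zero])
  also have "\<dots> \<le> shifted_energy \<beta> c C \<nu>"
    unfolding shifted_energy_def
    by (intro nn_integral_mono) (auto split: split_indicator simp: energy_kernel_infinite[OF assms(1)])
  finally have "\<top> * (emeasure \<nu> {0} * emeasure \<nu> {0}) \<le> shifted_energy \<beta> c C \<nu>"
    by (simp only: emeasure_pair_measure_Times[OF zero zero])
  then show False
    using \<open>emeasure \<nu> {0} \<noteq> 0\<close> assms(3) by (simp add: ennreal_mult_eq_top_iff top_unique)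
qed

lemma measure_annulus_tendsto_1:
  assumes "\<nu> \<in> prob_measures_R" "emeasure \<nu> {0} = 0"
  shows "(\<lambda>j. measure \<nu> (annulus (Suc j))) \<longlonglongrightarrow> 1"
proof -
  interpret prob_space \<nu> using assms(1) by (simp add: prob_measures_R_def)
  have sets: "sets \<nu> = sets borel" using assms(1) by (simp add: prob_measures_R_def)
  have "incseq (\<lambda>j. annulus (Suc j))"
  proof (rule incseq_SucI)
    fix j
    have "1 / real (Suc (Suc j)) \<le> 1 / real (Suc j)" by (simp add: frac_le)
    then show "annulus (Suc j) \<subseteq> annulus (Suc (Suc j))" by (auto simp: annulus_def)
  qed
  moreover have union: "(\<Union>j. annulus (Suc j)) = - {0}"
  proof (intro equalityI subsetI)
    fix x :: real assume "x \<in> - {0}"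
    obtain n :: nat where n: "max \<bar>x\<bar> (1/\<bar>x\<bar>) < real n" using reals_Archimedean2 by blast
    then have "1/real (Suc n) \<le> \<bar>x\<bar>" "\<bar>x\<bar> \<le> real (Suc n)"
      using \<open>x \<in> - {0}\<close> by (auto simp: field_simps)
    then show "x \<in> (\<Union>j. annulus (Suc j))" by (auto simp: annulus_def)
  qed (auto simp: annulus_def intro: less_le_trans[of 0 "1 / _"])
  ultimately have "(\<lambda>j. measure \<nu> (annulus (Suc j))) \<longlonglongrightarrow> measure \<nu> (\<Union>j. annulus (Suc j))"
    using sets by (intro finite_Lim_measure_incseq) auto
  moreover have "measure \<nu> (- {0}) = 1"
    using prob_compl[of "{0}"] assms(2) sets sets_eq_imp_space_eq[OF sets]
    by (simp add: emeasure_eq_measure Compl_eq_Diff_UNIV)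
  ultimately show ?thesis unfolding union by simp
qed

lemma annulus_nearly_full:
  assumes "\<nu> \<in> prob_measures_R" "emeasure \<nu> {0} = 0" "g < r"
  obtains k where "k \<ge> 1" "0 < measure \<nu> (annulus k)" "g / (measure \<nu> (annulus k))\<^sup>2 < r"
proof -
  have "(\<lambda>j. measure \<nu> (annulus (Suc j))) \<longlonglongrightarrow> 1"
    by (rule measure_annulus_tendsto_1[OF assms(1,2)])
  moreover from this have "(\<lambda>j. g / (measure \<nu> (annulus (Suc j)))\<^sup>2) \<longlonglongrightarrow> g / 1\<^sup>2"
    by (intro tendsto_intros) auto
  ultimately have "eventually (\<lambda>j. g / (measure \<nu> (annulus (Suc j)))\<^sup>2 < r
      \<and> 0 < measure \<nu> (annulus (Suc j))) sequentially"
    using assms(3) by (intro eventually_conj order_tendstoD) auto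
  then obtain j where "g / (measure \<nu> (annulus (Suc j)))\<^sup>2 < r" "0 < measure \<nu> (annulus (Suc j))"
    unfolding eventually_sequentially by auto
  then show ?thesis by (intro that[of "real (Suc j)"]) auto
qed

lemma energy_inf_upper_semicontinuous:
  assumes "\<beta> > 0" "0 \<le> c" "\<delta> \<longlonglongrightarrow> c" "eventually (\<lambda>n. 0 \<le> \<delta> n) sequentially"
    and "energy_inf \<beta> c < a"
  shows "eventually (\<lambda>n. energy_inf \<beta> (\<delta> n) < a) sequentially"
proof -
  define C where "C = kernel_lower_const \<beta> (c + 1)"
  obtain \<nu> where \<nu>: "\<nu> \<in> prob_measures_R" "energy \<beta> c \<nu> < a"
    using assms(5) unfolding energy_inf_def INF_less_iff by blast
  have energy: "energy \<beta> c \<nu> = enn2ereal (shifted_energy \<beta> c C \<nu>) - ereal C"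
    unfolding C_def using energy_eq_shifted_energy[OF assms(1,2) _ \<nu>(1)] by simp
  have finite: "shifted_energy \<beta> c C \<nu> \<noteq> \<top>"
  proof
    assume "shifted_energy \<beta> c C \<nu> = \<top>"
    then show False using \<nu>(2) unfolding energy by simp
  qed
  then obtain g where g: "shifted_energy \<beta> c C \<nu> = ennreal g" "0 \<le> g"
    by (cases "shifted_energy \<beta> c C \<nu>") auto
  have "ereal (g - C) < a" using \<nu>(2) g(2) unfolding energy g(1) by simp
  then obtain r where "ereal (g - C) < ereal r" "ereal r < a" using ereal_dense2 by blast
  then have r: "g < r + C" "ereal r < a" by simp_all
  obtain k where k: "k \<ge> 1" "0 < measure \<nu> (annulus k)" "g / (measure \<nu> (annulus k))\<^sup>2 < r + C"
    using annulus_nearly_full[OF \<nu>(1) emeasure_zero_if_shifted_energy_finite[OF assms(1) \<nu>(1) finite] r(1)] .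
  define m where "m = measure \<nu> (annulus k)"
  have "0 < m" using k(2) by (simp add: m_def)
  have "(\<lambda>n. g / m\<^sup>2 + \<bar>\<delta> n - c\<bar> * (2 * ln k) - C) \<longlonglongrightarrow> g / m\<^sup>2 + \<bar>c - c\<bar> * (2 * ln k) - C"
    by (intro tendsto_intros assms(3))
  then have "eventually (\<lambda>n. g / m\<^sup>2 + \<bar>\<delta> n - c\<bar> * (2 * ln k) - C < r) sequentially"
    using k(3) unfolding m_def by (intro order_tendstoD) auto
  moreover have "eventually (\<lambda>n. \<delta> n \<le> c + 1) sequentially"
    using order_tendstoD(2)[OF assms(3), of "c + 1"] by (auto elim: eventually_mono)
  ultimately show ?thesis using assms(4)
  proof eventually_elim
    case (elim n)
    have "energy_inf \<beta> (\<delta> n) \<le> ereal (g / m\<^sup>2 + \<bar>\<delta> n - c\<bar> * (2 * ln k) - C)"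
      unfolding C_def
      by (rule energy_inf_le_annulus[OF assms(1,2) _ elim(3,2) \<nu>(1) k(1) m_def[symmetric] \<open>0 < m\<close>
            g[unfolded C_def]]) simp
    also have "\<dots> < ereal r" using elim(1) by simp
    finally show ?case using r(2) by (rule less_trans)
  qed
qed

lemma energy_inf_tendsto:
  assumes "\<beta> > 0" "0 \<le> c" "\<delta> \<longlonglongrightarrow> c" "eventually (\<lambda>n. 0 < \<delta> n) sequentially"
  shows "(\<lambda>n. energy_inf \<beta> (\<delta> n)) \<longlonglongrightarrow> energy_inf \<beta> c"
proof (rule order_tendstoI)
  have concave: "ereal (l*x + (1-l)*y) \<le> energy_inf \<beta> (l*a + (1-l)*b)"
    if "0 \<le> a" "0 \<le> b" "0 \<le> l" "l \<le> 1" "0 < l*a + (1-l)*b"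
      "ereal x \<le> energy_inf \<beta> a" "ereal y \<le> energy_inf \<beta> b" for a b l x y
    using energy_inf_concave[OF assms(1) that(1-4) refl that(5-7)] .
  have lower: "ereal (- kernel_lower_const \<beta> (c + 1)) \<le> energy_inf \<beta> z" if "0 \<le> z" "z \<le> c + 1" for z
    using energy_inf_lower[OF assms(1) that] by simp
  fix a assume "a < energy_inf \<beta> c"
  from concave_lower_semicontinuous[OF concave lower assms(2-4) this]
  show "eventually (\<lambda>n. a < energy_inf \<beta> (\<delta> n)) sequentially" .
next
  have "eventually (\<lambda>n. 0 \<le> \<delta> n) sequentially" using assms(4) by eventually_elim simp
  fix a assume "energy_inf \<beta> c < a"
  from energy_inf_upper_semicontinuous[OF assms(1-3) \<open>eventually (\<lambda>n. 0 \<le> \<delta> n) sequentially\<close> this]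
  show "eventually (\<lambda>n. energy_inf \<beta> (\<delta> n) < a) sequentially" .
qed

theorem lemma4p5:
  fixes \<beta> c :: real and \<mu> \<alpha> :: "nat \<Rightarrow> real"
  assumes "\<beta> > 0"
    and "\<forall>n\<ge>1. \<mu> n > 0"
    and "(\<lambda>n. \<mu> n / real n) \<longlonglongrightarrow> c"
    and "\<alpha> = (\<lambda>n. \<mu> n / real n)"
  shows "weak_conv_bc (\<lambda>n. nu_eq \<beta> (\<alpha> n)) (nu_eq \<beta> c)
    \<and> (\<lambda>n. energy_inf \<beta> (\<alpha> n)) \<longlonglongrightarrow> energy_inf \<beta> c"
proof -
  have lim: "\<alpha> \<longlonglongrightarrow> c" using assms(3,4) by simp
  have pos: "0 < \<alpha> n" if "n \<ge> 1" for n using assms(2,4) that by simp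
  have nonneg: "0 \<le> \<alpha> n" for n
    using pos[of n] assms(4) by (cases "n = 0") auto
  have "0 \<le> c" using nonneg by (intro LIMSEQ_le_const[OF lim]) auto
  moreover have "eventually (\<lambda>n. 0 < \<alpha> n) sequentially"
    using pos by (auto simp: eventually_sequentially)
  ultimately show ?thesis
    using weak_conv_nu_eq[OF assms(1) lim nonneg] energy_inf_tendsto[OF assms(1) _ lim] by blast
qed

end
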